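(* Let $\vec G$ be a finite loopless directed multigraph and $\mathfrak f$ a fraternal completion of $\vec G$ of depth $a$. Then for every arc $e$ of $\vec G$, $$\bigl|\{f\in E_{\mathfrak f}: f\succeq e\}\bigr|\le C(\mathfrak f),\qquad\text{where } C(\mathfrak f)=\sum_{\substack{(i_1,\dots,i_k)\\ k\ge 0,\ i_j\ge 1,\ \sum_j i_j< a}}\ \prod_{j=1}^k \Delta^-(\vec H_{i_j})$$ (the sum ranges over all finite sequences of positive integers with sum less than $a$, including the empty sequence, whose product is $1$).
   Context: Let $\vec G$ be a finite loopless directed multigraph and $a$ a positive integer. A fraternal completion of $\vec G$ of depth $a$ is a triple $\mathfrak f=((E_1,\dots,E_a),w,\kappa)$ such that: $E_1=E(\vec G)$; for $2\le i\le a$, $E_i$ is the arc set of a directed multigraph with vertex set $V(\vec G)$; the sets $E_1,\dots,E_a$ are pairwise disjoint (distinct arcs may have the same head and tail); writing $E_{\mathfrak f}=\bigcup_{1\le i\le a}E_i$, the weight $w(e)$ of $e\in E_{\mathfrak f}$ is the $i$ with $e\in E_i$; $\kappa$ maps each $e\in\bigcup_{1<i\le a}E_i$ to a pair $(f,g)\in E_{\mathfrak f}^2$ with ${\rm tail}(f)\ne{\rm tail}(g)$, $w(e)=w(f)+w(g)$, ${\rm tail}(e)={\rm tail}(f)$, ${\rm head}(e)={\rm tail}(g)$, ${\rm head}(f)={\rm head}(g)$; and conversely, for all $i,j$ with $i+j\le a$ and all $f\in E_i$, $g\in E_j$ with ${\rm tail}(f)\ne{\rm tail}(g)$ and ${\rm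 head}(f)={\rm head}(g)$, there is a unique $e\in E_{i+j}$ with $\kappa(e)\in\{(f,g),(g,f)\}$. Let $\prec$ be the partial order on $E_{\mathfrak f}$ obtained as the transitive closure of the relations $f\prec e$ and $g\prec e$ whenever $\kappa(e)=(f,g)$; $f\preceq e$ means $f\prec e$ or $f=e$. $\vec H_i$ denotes the directed multigraph $(V(\vec G),E_i)$ and $\Delta^-(\vec H_i)$ its maximum in-degree. *)

theory Defs
  imports Main
begin

text \<open>A finite loopless directed multigraph: vertex set V, arc set E, with
  arcs carrying tail and head maps (so parallel arcs are allowed).\<close>
definition loopless_multidigraph ::
  "'v set \<Rightarrow> 'e set \<Rightarrow> ('e \<Rightarrow> 'v) \<Rightarrow> ('e \<Rightarrow> 'v) \<Rightarrow> bool" where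
  "loopless_multidigraph V E tail head \<longleftrightarrow>
     finite V \<and> finite E \<and>
     (\<forall>e\<in>E. tail e \<in> V \<and> head e \<in> V \<and> tail e \<noteq> head e)"

definition all_arcs :: "nat \<Rightarrow> (nat \<Rightarrow> 'e set) \<Rightarrow> 'e set" where
  "all_arcs a Es = (\<Union>i\<in>{1..a}. Es i)"

text \<open>Fraternal completion ((E_1..E_a), w, kappa) of depth a of the digraph
  (V,E,tail,head). Tail and head of all arcs are given by the global maps tail, head.\<close>
definition fraternal_completion ::
  "'v set \<Rightarrow> 'e set \<Rightarrow> ('e \<Rightarrow> 'v) \<Rightarrow> ('e \<Rightarrow> 'v) \<Rightarrow> nat \<Rightarrow>
   (nat \<Rightarrow> 'e set) \<Rightarrow> ('e \<Rightarrow> nat) \<Rightarrow> ('e \<Rightarrow> 'e \<times> 'e) \<Rightarrow> bool" where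
  "fraternal_completion V E tail head a Es w \<kappa> \<longleftrightarrow>
     1 \<le> a \<and>
     Es 1 = E \<and>
     (\<forall>i\<in>{2..a}. \<forall>e\<in>Es i. tail e \<in> V \<and> head e \<in> V) \<and>
     (\<forall>i\<in>{1..a}. \<forall>j\<in>{1..a}. i \<noteq> j \<longrightarrow> Es i \<inter> Es j = {}) \<and>
     (\<forall>i\<in>{1..a}. \<forall>e\<in>Es i. w e = i) \<and>
     (\<forall>i\<in>{2..a}. \<forall>e\<in>Es i.
        fst (\<kappa> e) \<in> all_arcs a Es \<and> snd (\<kappa> e) \<in> all_arcs a Es \<and>
        tail (fst (\<kappa> e)) \<noteq> tail (snd (\<kappa> e)) \<and>
        w e = w (fst (\<kappa> e)) + w (snd (\<kappa> e)) \<and>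
        tail e = tail (fst (\<kappa> e)) \<and>
        head e = tail (snd (\<kappa> e)) \<and>
        head (fst (\<kappa> e)) = head (snd (\<kappa> e))) \<and>
     (\<forall>i j. 1 \<le> i \<longrightarrow> 1 \<le> j \<longrightarrow> i + j \<le> a \<longrightarrow>
        (\<forall>f\<in>Es i. \<forall>g\<in>Es j. tail f \<noteq> tail g \<longrightarrow> head f = head g \<longrightarrow>
           (\<exists>!e. e \<in> Es (i + j) \<and> (\<kappa> e = (f, g) \<or> \<kappa> e = (g, f)))))"

text \<open>Generating relation of the partial order: f \<prec> e and g \<prec> e whenever
  kappa e = (f,g); pairs are (smaller, larger).\<close>
definition kappa_rel :: "nat \<Rightarrow> (nat \<Rightarrow> 'e set) \<Rightarrow> ('e \<Rightarrow> 'e \<times> 'e) \<Rightarrow> ('e \<times> 'e) set" where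
  "kappa_rel a Es \<kappa> =
     {(f, e). \<exists>i\<in>{2..a}. e \<in> Es i \<and> (f = fst (\<kappa> e) \<or> f = snd (\<kappa> e))}"

definition prec_eq :: "nat \<Rightarrow> (nat \<Rightarrow> 'e set) \<Rightarrow> ('e \<Rightarrow> 'e \<times> 'e) \<Rightarrow> 'e \<Rightarrow> 'e \<Rightarrow> bool" where
  "prec_eq a Es \<kappa> f e \<longleftrightarrow> (f, e) \<in> (kappa_rel a Es \<kappa>)\<^sup>*"

definition max_indeg :: "'v set \<Rightarrow> ('e \<Rightarrow> 'v) \<Rightarrow> 'e set \<Rightarrow> nat" where
  "max_indeg V head A = Max (insert 0 ((\<lambda>v. card {e\<in>A. head e = v}) ` V))"

definition completion_bound :: "'v set \<Rightarrow> ('e \<Rightarrow> 'v) \<Rightarrow> nat \<Rightarrow> (nat \<Rightarrow> 'e set) \<Rightarrow> nat" where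
  "completion_bound V head a Es =
     (\<Sum>xs\<in>{xs :: nat list. (\<forall>x\<in>set xs. 1 \<le> x) \<and> sum_list xs < a}.
        prod_list (map (\<lambda>i. max_indeg V head (Es i)) xs))"

end

theory Submission
  imports Defs
begin

(* Every f with e \<preceq> f is reached from e by a
   chain e = f_0 \<prec> f_1 \<prec> ... \<prec> f_k = f in which each f_j is the arc produced
   by kappa from f_(j-1) and a "brother" g_j of weight i_j with the same head;
   then w f = 1 + i_1 + ... + i_k, so the weight sequence (i_k, ..., i_1) has
   positive entries and sum < a.  Conversely, for a fixed sequence i, the set
   climb e i of arcs obtained this way has at most prod Delta^-(H_(i_j))
   elements: a given arc f has at most Delta^-(H_i) brothers of weight i
   (arcs of E_i with the same head), and each brother yields a unique arc by
   the uniqueness clause of the completion.  Summing over the finitely many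
   sequences gives the bound C(f). *)

text \<open>The index set of the sum defining C(f) is finite: each sequence has
  length and entries bounded by a.\<close>
lemma finite_positive_lists_sum_less:
  "finite {xs :: nat list. (\<forall>x\<in>set xs. 1 \<le> x) \<and> sum_list xs < a}"
proof (rule finite_subset[OF _ finite_lists_length_le[of "{1..a}" a]])
  have len: "length xs \<le> sum_list xs" if "\<forall>x\<in>set xs. (1::nat) \<le> x" for xs
    using that by (induction xs) auto
  have elem: "x \<le> sum_list xs" if "x \<in> set xs" for x and xs :: "nat list"
    using that by (induction xs) auto
  show "{xs. (\<forall>x\<in>set xs. 1 \<le> x) \<and> sum_list xs < a}
        \<subseteq> {xs. set xs \<subseteq> {1..a} \<and> length xs \<le> a}"
    using len elem by fastforce
qed simp

lemma indeg_le_max_indeg: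
  assumes "finite V" and "v \<in> V"
  shows "card {e \<in> A. head e = v} \<le> max_indeg V head A"
  unfolding max_indeg_def by (rule Max_ge) (use assms in auto)

locale fraternal_completion_of_loopless =
  fixes V :: "'v set" and E :: "'e set" and tail head :: "'e \<Rightarrow> 'v"
    and a :: nat and Es :: "nat \<Rightarrow> 'e set" and w :: "'e \<Rightarrow> nat"
    and \<kappa> :: "'e \<Rightarrow> 'e \<times> 'e"
  assumes graph: "loopless_multidigraph V E tail head"
    and completion: "fraternal_completion V E tail head a Es w \<kappa>"
begin

lemma depth_pos: "1 \<le> a"
  and layer_one: "Es 1 = E"
  and layer_ends_in_V: "\<And>i e. i \<in> {2..a} \<Longrightarrow> e \<in> Es i \<Longrightarrow> tail e \<in> V \<and> head e \<in> V"
  and weight_layer: "\<And>i e. i \<in> {1..a} \<Longrightarrow> e \<in> Es i \<Longrightarrow> w e = i"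
  and kappa_props: "\<And>i e. i \<in> {2..a} \<Longrightarrow> e \<in> Es i \<Longrightarrow>
        fst (\<kappa> e) \<in> all_arcs a Es \<and> snd (\<kappa> e) \<in> all_arcs a Es \<and>
        tail (fst (\<kappa> e)) \<noteq> tail (snd (\<kappa> e)) \<and>
        w e = w (fst (\<kappa> e)) + w (snd (\<kappa> e)) \<and>
        tail e = tail (fst (\<kappa> e)) \<and>
        head e = tail (snd (\<kappa> e)) \<and>
        head (fst (\<kappa> e)) = head (snd (\<kappa> e))"
  and kappa_unique: "\<And>i j f g. 1 \<le> i \<Longrightarrow> 1 \<le> j \<Longrightarrow> i + j \<le> a \<Longrightarrow>
        f \<in> Es i \<Longrightarrow> g \<in> Es j \<Longrightarrow> tail f \<noteq> tail g \<Longrightarrow> head f = head g \<Longrightarrow>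
        (\<exists>!e. e \<in> Es (i + j) \<and> (\<kappa> e = (f, g) \<or> \<kappa> e = (g, f)))"
  using completion unfolding fraternal_completion_def by blast+

lemma finite_V: "finite V" and finite_E: "finite E"
  and head_E_in_V: "\<And>e. e \<in> E \<Longrightarrow> head e \<in> V"
  using graph unfolding loopless_multidigraph_def by auto

lemma arc_weight: "f \<in> all_arcs a Es \<Longrightarrow> 1 \<le> w f \<and> w f \<le> a \<and> f \<in> Es (w f)"
  unfolding all_arcs_def using weight_layer by fastforce

lemma arcI: "1 \<le> i \<Longrightarrow> i \<le> a \<Longrightarrow> f \<in> Es i \<Longrightarrow> f \<in> all_arcs a Es"
  unfolding all_arcs_def by auto

lemma head_in_V: "f \<in> all_arcs a Es \<Longrightarrow> head f \<in> V"
proof -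
  assume "f \<in> all_arcs a Es"
  then have f: "1 \<le> w f" "w f \<le> a" "f \<in> Es (w f)" using arc_weight by auto
  show ?thesis
  proof (cases "w f = 1")
    case True
    then show ?thesis using f(3) layer_one head_E_in_V by auto
  next
    case False
    then show ?thesis using f layer_ends_in_V[of "w f" f] by auto
  qed
qed

text \<open>kappa is injective on each layer of weight at least 2: by uniqueness,
  an arc is determined by the (unordered) pair of arcs it comes from.\<close>
lemma kappa_inj_on_layer:
  assumes k: "k \<in> {2..a}"
  shows "inj_on \<kappa> (Es k)"
proof
  fix e1 e2 assume e: "e1 \<in> Es k" "e2 \<in> Es k" "\<kappa> e1 = \<kappa> e2"
  define f g where "f = fst (\<kappa> e1)" and "g = snd (\<kappa> e1)"
  note K = kappa_props[OF k e(1), folded f_def g_def]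
  have "w e1 = k" using weight_layer[of k e1] k e(1) by auto
  then have weights: "w f + w g = k" using K by simp
  have "\<exists>!e. e \<in> Es (w f + w g) \<and> (\<kappa> e = (f, g) \<or> \<kappa> e = (g, f))"
    using kappa_unique[of "w f" "w g" f g] arc_weight K weights k by auto
  then show "e1 = e2" using e weights f_def g_def by (metis prod.collapse)
qed

text \<open>All layers are finite: layer k injects via kappa into pairs of arcs of
  smaller weight.\<close>
lemma finite_layer: "k \<in> {1..a} \<Longrightarrow> finite (Es k)"
proof (induction k rule: less_induct)
  case (less k)
  show ?case
  proof (cases "k = 1")
    case True
    then show ?thesis using layer_one finite_E by simp
  next
    case False
    with less.prems have k: "k \<in> {2..a}" by auto
    define B where "B = (\<Union>i\<in>{1..<k}. Es i)"
    have "finite B" unfolding B_def using less.IH less.prems by auto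
    moreover have "\<kappa> ` Es k \<subseteq> B \<times> B"
    proof (rule image_subsetI)
      fix e assume e: "e \<in> Es k"
      note K = kappa_props[OF k e]
      have "w e = k" using weight_layer[of k e] k e by auto
      moreover have "1 \<le> w (fst (\<kappa> e)) \<and> fst (\<kappa> e) \<in> Es (w (fst (\<kappa> e)))"
        "1 \<le> w (snd (\<kappa> e)) \<and> snd (\<kappa> e) \<in> Es (w (snd (\<kappa> e)))"
        using K arc_weight by blast+
      ultimately have "fst (\<kappa> e) \<in> B" "snd (\<kappa> e) \<in> B"
        unfolding B_def using K by auto
      then show "\<kappa> e \<in> B \<times> B" by (simp add: mem_Times_iff)
    qed
    ultimately show ?thesis
      using finite_imageD[OF _ kappa_inj_on_layer[OF k]] finite_subset by blast
  qed
qed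

definition successors :: "nat \<Rightarrow> 'e \<Rightarrow> 'e set" where
  "successors i f = {f'. \<exists>g\<in>Es i. head g = head f \<and> tail f \<noteq> tail g \<and>
      (\<kappa> f' = (f, g) \<or> \<kappa> f' = (g, f)) \<and> f' \<in> Es (w f + i)}"

text \<open>An arc has at most Delta^-(H_i) successors through layer i, since each
  brother determines its successor uniquely.\<close>
lemma successors_bound:
  assumes f: "f \<in> all_arcs a Es" and i: "1 \<le> i" "w f + i \<le> a"
  shows "finite (successors i f) \<and> card (successors i f) \<le> max_indeg V head (Es i)"
proof -
  define brothers where "brothers = {g \<in> Es i. head g = head f}"
  define succ_of where
    "succ_of g = (THE f'. f' \<in> Es (w f + i) \<and> (\<kappa> f' = (f, g) \<or> \<kappa> f' = (g, f)))" for g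
  have "successors i f \<subseteq> succ_of ` brothers"
  proof
    fix f' assume "f' \<in> successors i f"
    then obtain g where g: "g \<in> Es i" "head g = head f" "tail f \<noteq> tail g"
        "\<kappa> f' = (f, g) \<or> \<kappa> f' = (g, f)" "f' \<in> Es (w f + i)"
      unfolding successors_def by auto
    have "\<exists>!x. x \<in> Es (w f + i) \<and> (\<kappa> x = (f, g) \<or> \<kappa> x = (g, f))"
      using kappa_unique[of "w f" i f g] arc_weight[OF f] i g by auto
    then have "succ_of g = f'" unfolding succ_of_def by (rule the1_equality) (use g in auto)
    then show "f' \<in> succ_of ` brothers" using g unfolding brothers_def by auto
  qed
  moreover have "finite brothers"
    unfolding brothers_def using finite_layer[of i] i arc_weight[OF f] by auto
  moreover have "card brothers \<le> max_indeg V head (Es i)"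
    unfolding brothers_def by (rule indeg_le_max_indeg[OF finite_V head_in_V[OF f]])
  ultimately show ?thesis
    by (meson card_image_le card_mono finite_imageI finite_subset order_trans)
qed

text \<open>Arcs reached from e by climbing through the layers i_k, ..., i_1
  (the list is read from its last element).\<close>
fun climb :: "'e \<Rightarrow> nat list \<Rightarrow> 'e set" where
  "climb e [] = {e}"
| "climb e (i # xs) = (\<Union>f\<in>climb e xs. successors i f)"

lemma climb_bound:
  assumes e: "e \<in> E" and pos: "\<forall>x\<in>set xs. 1 \<le> x" and small: "sum_list xs < a"
  shows "(\<forall>f\<in>climb e xs. f \<in> all_arcs a Es \<and> w f = 1 + sum_list xs) \<and>
    finite (climb e xs) \<and>
    card (climb e xs) \<le> prod_list (map (\<lambda>i. max_indeg V head (Es i)) xs)"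
  using pos small
proof (induction xs)
  case Nil
  have "e \<in> Es 1" using e layer_one by simp
  then show ?case using weight_layer[of 1 e] arcI[of 1 e] depth_pos by auto
next
  case (Cons i xs)
  let ?\<Delta> = "max_indeg V head (Es i)"
  have IH: "\<forall>f\<in>climb e xs. f \<in> all_arcs a Es \<and> w f = 1 + sum_list xs"
      "finite (climb e xs)"
      "card (climb e xs) \<le> prod_list (map (\<lambda>i. max_indeg V head (Es i)) xs)"
    using Cons by auto
  have i: "1 \<le> i" "1 + sum_list xs + i \<le> a" using Cons.prems by auto
  have succ: "finite (successors i f) \<and> card (successors i f) \<le> ?\<Delta>"
    if "f \<in> climb e xs" for f
    using successors_bound[of f i] IH(1) that i by auto
  have weight: "f' \<in> all_arcs a Es \<and> w f' = 1 + sum_list (i # xs)"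
    if f': "f' \<in> climb e (i # xs)" for f'
  proof -
    obtain f where f: "f \<in> climb e xs" "f' \<in> Es (w f + i)"
      using f' by (auto simp: successors_def)
    then show ?thesis using IH(1) i arcI[of "w f + i" f'] weight_layer[of "w f + i" f'] by auto
  qed
  have "card (climb e (i # xs)) \<le> (\<Sum>f\<in>climb e xs. card (successors i f))"
    using card_UN_le IH(2) by simp
  also have "\<dots> \<le> (\<Sum>f\<in>climb e xs. ?\<Delta>)" by (rule sum_mono) (use succ in auto)
  also have "\<dots> = card (climb e xs) * ?\<Delta>" by simp
  also have "\<dots> \<le> prod_list (map (\<lambda>i. max_indeg V head (Es i)) (i # xs))"
    using IH(3) by (simp add: mult.commute)
  finally show ?case using weight IH(2) succ by auto
qed

lemma upper_arc_in_climb: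
  assumes "(e, f) \<in> (kappa_rel a Es \<kappa>)\<^sup>*" and e: "e \<in> E"
  shows "\<exists>xs. (\<forall>x\<in>set xs. 1 \<le> x) \<and> w f = 1 + sum_list xs \<and> f \<in> climb e xs"
  using assms(1)
proof (induction rule: rtrancl_induct)
  case base
  have "e \<in> Es 1" using e layer_one by simp
  then show ?case using weight_layer[of 1 e] depth_pos by (intro exI[of _ "[]"]) auto
next
  case (step f f')
  from step.hyps(2) obtain k where k: "k \<in> {2..a}" "f' \<in> Es k"
      "f = fst (\<kappa> f') \<or> f = snd (\<kappa> f')"
    unfolding kappa_rel_def by auto
  from step.IH obtain xs where xs: "\<forall>x\<in>set xs. 1 \<le> x" "w f = 1 + sum_list xs" "f \<in> climb e xs"
    by blast
  note K = kappa_props[OF k(1,2)]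
  obtain g where g: "g \<in> all_arcs a Es" "\<kappa> f' = (f, g) \<or> \<kappa> f' = (g, f)"
      "tail f \<noteq> tail g" "head g = head f" "w f' = w f + w g"
  proof (cases "f = fst (\<kappa> f')")
    case True
    then show ?thesis using K that[of "snd (\<kappa> f')"] by auto
  next
    case False
    then have "f = snd (\<kappa> f')" using k(3) by blast
    then show ?thesis using K that[of "fst (\<kappa> f')"] by auto
  qed
  have g_layer: "1 \<le> w g" "g \<in> Es (w g)" using arc_weight[OF g(1)] by auto
  have "w f' = k" using weight_layer[of k f'] k by auto
  then have "f' \<in> successors (w g) f"
    unfolding successors_def using g g_layer k(2) by auto
  then show ?case
    using xs g_layer g(5) by (intro exI[of _ "w g # xs"]) auto
qed

end

theorem mainTheorem10:
  fixes V :: "'v set" and E :: "'e set" and tail head :: "'e \<Rightarrow> 'v"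
    and a :: nat and Es :: "nat \<Rightarrow> 'e set" and w :: "'e \<Rightarrow> nat"
    and \<kappa> :: "'e \<Rightarrow> 'e \<times> 'e"
  assumes "loopless_multidigraph V E tail head"
    and "fraternal_completion V E tail head a Es w \<kappa>"
    and "e \<in> E"
  shows "card {f \<in> all_arcs a Es. prec_eq a Es \<kappa> e f} \<le> completion_bound V head a Es"
proof -
  interpret fraternal_completion_of_loopless V E tail head a Es w \<kappa>
    using assms(1,2) by unfold_locales
  define L where "L = {xs :: nat list. (\<forall>x\<in>set xs. 1 \<le> x) \<and> sum_list xs < a}"
  have L: "finite L" using finite_positive_lists_sum_less unfolding L_def .
  have bound: "finite (climb e xs) \<and>
      card (climb e xs) \<le> prod_list (map (\<lambda>i. max_indeg V head (Es i)) xs)" if "xs \<in> L" for xs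
    using climb_bound[OF assms(3)] that unfolding L_def by blast
  have "{f \<in> all_arcs a Es. prec_eq a Es \<kappa> e f} \<subseteq> (\<Union>xs\<in>L. climb e xs)"
    using upper_arc_in_climb[OF _ assms(3)] arc_weight unfolding prec_eq_def L_def
    by fastforce
  then have "card {f \<in> all_arcs a Es. prec_eq a Es \<kappa> e f} \<le> card (\<Union>xs\<in>L. climb e xs)"
    by (rule card_mono[rotated]) (use L bound in auto)
  also have "\<dots> \<le> (\<Sum>xs\<in>L. card (climb e xs))" by (rule card_UN_le[OF L])
  also have "\<dots> \<le> (\<Sum>xs\<in>L. prod_list (map (\<lambda>i. max_indeg V head (Es i)) xs))"
    by (rule sum_mono) (use bound in auto)
  finally show ?thesis unfolding completion_bound_def L_def .
qed

end
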